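(* Let $\sigma:[0,\infty)\to[0,\infty)$ be nondecreasing with $\lim_{t\to\infty}\sigma(t)=\infty$. If $\gamma(\sigma)>0$, then $\gamma(\sigma)+1=\gamma((\sigma^{\iota})_{\star})$.
   Context: $\sigma^{\iota}(t):=\sigma(1/t)$ for $t>0$. For $h:(0,\infty)\to[0,\infty)$ nonincreasing with $\lim_{t\to0}h(t)=\infty$, $h_{\star}(t):=\inf_{s>0}\{h(s)+ts\}$ for $t\ge0$. For a nondecreasing function $\sigma$ tending to $\infty$ and $\gamma>0$, $(P_{\sigma,\gamma})$ holds if there is $K>1$ with $\limsup_{t\to\infty}\sigma(K^{\gamma}t)/\sigma(t)<K$; $\gamma(\sigma):=\sup\{\gamma>0:(P_{\sigma,\gamma})\text{ holds}\}$, and $:=0$ if none holds. *)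

theory Defs
  imports "HOL-Analysis.Analysis"
begin

definition iota :: "(real \<Rightarrow> real) \<Rightarrow> real \<Rightarrow> real" where
  "iota \<sigma> t = \<sigma> (1 / t)"

definition lstar :: "(real \<Rightarrow> real) \<Rightarrow> real \<Rightarrow> real" where
  "lstar h t = Inf ((\<lambda>s. h s + t * s) ` {0<..})"

definition P_prop :: "(real \<Rightarrow> real) \<Rightarrow> real \<Rightarrow> bool" where
  "P_prop \<sigma> \<gamma> \<longleftrightarrow> (\<exists>K>1. Limsup at_top (\<lambda>t. ereal (\<sigma> (K powr \<gamma> * t) / \<sigma> t)) < ereal K)"

definition gamma_idx :: "(real \<Rightarrow> real) \<Rightarrow> ereal" where
  "gamma_idx \<sigma> = (if {\<gamma>::real. \<gamma> > 0 \<and> P_prop \<sigma> \<gamma>} = {} then 0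
     else Sup (ereal ` {\<gamma>::real. \<gamma> > 0 \<and> P_prop \<sigma> \<gamma>}))"

end

theory Submission
  imports Defs
begin

text \<open>Write \<open>g = lstar (iota \<sigma>)\<close>, so that \<open>g t\<close> is the infimum of \<open>\<sigma> v + t / v\<close> over \<open>v > 0\<close>. A bound
  \<open>\<sigma> (K powr \<gamma> * v) \<le> L * \<sigma> v\<close> with \<open>L < K\<close>, iterated and inserted into this infimum,
  gives \<open>g ((K ^ n) powr (\<gamma> + 1) * t) \<le> M * g t\<close> with \<open>M < K ^ n\<close>: the extra exponent \<open>1\<close>
  is paid for by the term \<open>t / v\<close>. Conversely, from \<open>g (K powr \<beta> * t) \<le> L * g t\<close> with
  \<open>\<beta> > 1\<close>, for large \<open>u\<close> pick (by doubling) a \<open>t\<close> for which \<open>v = u\<close> is nearly optimal in the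
  infimum, so that \<open>g t\<close> is comparable to \<open>\<sigma> u\<close>; scaling \<open>t\<close> up and using monotonicity of
  \<open>\<sigma>\<close> bounds \<open>\<sigma> ((K ^ m) powr (\<beta> - 1) * u)\<close> by \<open>4 * L ^ m * \<sigma> u\<close>. Thus \<open>\<gamma> \<mapsto> \<gamma> + 1\<close>
  maps the admissible exponents of \<open>\<sigma>\<close> onto those of \<open>g\<close> above \<open>1\<close>, and the suprema
  differ by \<open>1\<close>.\<close>

lemma P_prop_iff_eventually_le:
  fixes f :: "real \<Rightarrow> real"
  assumes pos: "\<forall>\<^sub>F t in at_top. f t > 0"
  shows "P_prop f \<gamma> \<longleftrightarrow>
    (\<exists>K>1. \<exists>L>0. L < K \<and> (\<forall>\<^sub>F t in at_top. f (K powr \<gamma> * t) \<le> L * f t))"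
proof
  assume "P_prop f \<gamma>"
  then obtain K where K: "K > 1"
    and lim: "Limsup at_top (\<lambda>t. ereal (f (K powr \<gamma> * t) / f t)) < ereal K"
    unfolding P_prop_def by blast
  obtain L where L: "Limsup at_top (\<lambda>t. ereal (f (K powr \<gamma> * t) / f t)) < ereal L" "L < K"
    using ereal_dense2[OF lim] by auto
  have "filterlim (\<lambda>t. K powr \<gamma> * t) at_top at_top"
    using K by (intro filterlim_tendsto_pos_mult_at_top[OF tendsto_const _ filterlim_ident]) simp
  then have pos_scaled: "\<forall>\<^sub>F t in at_top. f (K powr \<gamma> * t) > 0"
    by (rule eventually_compose_filterlim[OF pos])
  have bound: "\<forall>\<^sub>F t in at_top. f (K powr \<gamma> * t) \<le> L * f t"
    using Limsup_lessD[OF L(1)] pos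
    by eventually_elim (simp add: divide_less_eq less_imp_le)
  obtain t where "f t > 0" "f (K powr \<gamma> * t) > 0" "f (K powr \<gamma> * t) \<le> L * f t"
    using eventually_happens'[OF _ eventually_conj[OF pos eventually_conj[OF pos_scaled bound]]]
    by auto
  then have "L > 0"
    by (metis less_le_trans zero_less_mult_pos2)
  with K L(2) bound
  show "\<exists>K>1. \<exists>L>0. L < K \<and> (\<forall>\<^sub>F t in at_top. f (K powr \<gamma> * t) \<le> L * f t)"
    by blast
next
  assume "\<exists>K>1. \<exists>L>0. L < K \<and> (\<forall>\<^sub>F t in at_top. f (K powr \<gamma> * t) \<le> L * f t)"
  then obtain K L where K: "K > 1" "L < K"
    and bound: "\<forall>\<^sub>F t in at_top. f (K powr \<gamma> * t) \<le> L * f t"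
    by blast
  have "\<forall>\<^sub>F t in at_top. ereal (f (K powr \<gamma> * t) / f t) \<le> ereal L"
    using bound pos by eventually_elim (simp add: divide_le_eq)
  then have "Limsup at_top (\<lambda>t. ereal (f (K powr \<gamma> * t) / f t)) \<le> ereal L"
    by (rule Limsup_bounded)
  also have "\<dots> < ereal K"
    using K by simp
  finally show "P_prop f \<gamma>"
    unfolding P_prop_def using K by blast
qed

lemma eventually_scaled_le_power:
  fixes f :: "real \<Rightarrow> real"
  assumes "q > 0" "L \<ge> 0" and bound: "\<forall>\<^sub>F t in at_top. f (q * t) \<le> L * f t"
  shows "\<forall>\<^sub>F t in at_top. f (q ^ n * t) \<le> L ^ n * f t"
proof (induction n)
  case 0
  show ?case by simp
next
  case (Suc n)
  have "filterlim (\<lambda>t. q ^ n * t) at_top at_top"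
    using assms(1) by (intro filterlim_tendsto_pos_mult_at_top[OF tendsto_const _ filterlim_ident]) simp
  then have "\<forall>\<^sub>F t in at_top. f (q * (q ^ n * t)) \<le> L * f (q ^ n * t)"
    by (rule eventually_compose_filterlim[OF bound])
  with Suc.IH show ?case
  proof eventually_elim
    case (elim t)
    then have "f (q * (q ^ n * t)) \<le> L * (L ^ n * f t)"
      using assms(2) by (meson mult_left_mono order_trans)
    then show ?case
      by (simp add: mult.assoc)
  qed
qed

lemma eventually_mult_power_less_power:
  fixes c L K :: real
  assumes "0 \<le> L" "L < K"
  shows "\<forall>\<^sub>F n in sequentially. c * L ^ n < K ^ n"
proof -
  have "(\<lambda>n. c * (L / K) ^ n) \<longlonglongrightarrow> 0"
    using tendsto_mult_right_zero[OF LIMSEQ_power_zero[of "L / K"]] assms by simp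
  then have "\<forall>\<^sub>F n in sequentially. c * (L / K) ^ n < 1"
    by (rule order_tendstoD(2)) simp
  then show ?thesis
  proof eventually_elim
    case (elim n)
    have "K ^ n > 0"
      using assms by simp
    with elim show ?case
      by (simp add: power_divide field_simps)
  qed
qed

lemma eventually_at_top_posE:
  fixes P :: "real \<Rightarrow> bool"
  assumes "\<forall>\<^sub>F t in at_top. P t"
  obtains T where "T > 0" "\<And>t. t \<ge> T \<Longrightarrow> P t"
proof -
  obtain N where "\<And>t. t \<ge> N \<Longrightarrow> P t"
    using assms by (auto simp: eventually_at_top_linorder)
  then show ?thesis
    using that[of "max N 1"] by simp
qed

lemma doubling_crossing:
  fixes h :: "real \<Rightarrow> real"
  assumes "T > 0" "T \<le> h T" and below: "\<forall>\<^sub>F t in at_top. h t < t"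
  shows "\<exists>t\<ge>T. t \<le> h t \<and> h (2 * t) < 2 * t"
proof -
  define P where "P j \<longleftrightarrow> h (2 ^ j * T) < 2 ^ j * T" for j :: nat
  obtain S where S: "\<And>t. t \<ge> S \<Longrightarrow> h t < t"
    using below by (auto simp: eventually_at_top_linorder)
  obtain j :: nat where "S / T < 2 ^ j"
    using real_arch_pow[of 2 "S / T"] by auto
  then have "P j"
    using S \<open>T > 0\<close> by (simp add: P_def divide_less_eq less_imp_le)
  moreover have "\<not> P 0"
    using assms(2) by (simp add: P_def)
  ultimately obtain k where "\<not> P k" "P (Suc k)"
    using ex_least_nat_less by blast
  moreover have "2 ^ k * T \<ge> T"
    using \<open>T > 0\<close> by simp
  ultimately show ?thesis
    unfolding P_def by (intro exI[of _ "2 ^ k * T"]) (simp add: mult.assoc)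
qed

lemma lstar_iota_greatest:
  assumes "\<And>v. v > 0 \<Longrightarrow> c \<le> \<sigma> v + t / v"
  shows "c \<le> lstar (iota \<sigma>) t"
  unfolding lstar_def
proof (rule cInf_greatest)
  fix x
  assume "x \<in> (\<lambda>s. iota \<sigma> s + t * s) ` {0<..}"
  then obtain s where "s > 0" "x = \<sigma> (1 / s) + t / (1 / s)"
    by (auto simp: iota_def)
  then show "c \<le> x"
    using assms[of "1 / s"] by simp
qed simp

context
  fixes \<sigma> :: "real \<Rightarrow> real"
  assumes nonneg: "\<And>t. t \<ge> 0 \<Longrightarrow> \<sigma> t \<ge> 0"
begin

lemma lstar_iota_le:
  assumes "v > 0" "t \<ge> 0"
  shows "lstar (iota \<sigma>) t \<le> \<sigma> v + t / v"
proof -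
  have "bdd_below ((\<lambda>s. iota \<sigma> s + t * s) ` {0<..})"
    using assms(2) nonneg by (intro bdd_belowI2[of _ 0]) (simp add: iota_def)
  moreover have "iota \<sigma> (1 / v) + t * (1 / v) \<in> (\<lambda>s. iota \<sigma> s + t * s) ` {0<..}"
    by (rule imageI) (use assms(1) in simp)
  ultimately have "lstar (iota \<sigma>) t \<le> iota \<sigma> (1 / v) + t * (1 / v)"
    unfolding lstar_def by (rule cInf_lower[rotated])
  then show ?thesis
    by (simp add: iota_def)
qed

lemma lstar_iota_scale_le:
  assumes "l \<ge> 1" "t \<ge> 0"
  shows "lstar (iota \<sigma>) (l * t) \<le> l * lstar (iota \<sigma>) t"
proof -
  have "lstar (iota \<sigma>) (l * t) / l \<le> lstar (iota \<sigma>) t"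
  proof (rule lstar_iota_greatest)
    fix v :: real
    assume "v > 0"
    then have "lstar (iota \<sigma>) (l * t) \<le> \<sigma> v + l * t / v"
      using assms by (intro lstar_iota_le) auto
    also have "\<dots> \<le> l * (\<sigma> v + t / v)"
      using assms nonneg[of v] \<open>v > 0\<close> by (simp add: algebra_simps mult_le_cancel_right1)
    finally show "lstar (iota \<sigma>) (l * t) / l \<le> \<sigma> v + t / v"
      using assms by (simp add: divide_le_eq mult.commute)
  qed
  then show ?thesis
    using assms by (simp add: divide_le_eq mult.commute)
qed

lemma lstar_iota_sublinear:
  assumes "e > 0"
  shows "\<forall>\<^sub>F t in at_top. lstar (iota \<sigma>) t \<le> e * t"
proof -
  have "\<forall>\<^sub>F t in at_top. 2 * \<sigma> (2 / e) / e \<le> t \<and> 0 \<le> t"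
    by (intro eventually_conj eventually_ge_at_top)
  then show ?thesis
  proof eventually_elim
    case (elim t)
    have "lstar (iota \<sigma>) t \<le> \<sigma> (2 / e) + e * t / 2"
      using lstar_iota_le[of "2 / e" t] assms elim by (simp add: mult.commute)
    also have "\<dots> \<le> e * t"
      using elim assms by (simp add: divide_le_eq mult.commute)
    finally show ?case .
  qed
qed

text \<open>The value at \<open>v = 2 * T\<close> already undercuts \<open>t / v\<close> for every \<open>v < T\<close>.\<close>

lemma lstar_iota_greatest_tail:
  assumes "T > 0" "2 * T * \<sigma> (2 * T) \<le> t" and tail: "\<And>v. v \<ge> T \<Longrightarrow> c \<le> \<sigma> v + t / v"
  shows "c \<le> lstar (iota \<sigma>) t"
proof (rule lstar_iota_greatest)
  fix v :: real
  assume "v > 0"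
  show "c \<le> \<sigma> v + t / v"
  proof (cases "v \<ge> T")
    case False
    have "t \<ge> 0"
      using assms(1,2) nonneg[of "2 * T"] by (smt (verit) mult_nonneg_nonneg)
    have "c \<le> \<sigma> (2 * T) + t / (2 * T)"
      using tail[of "2 * T"] assms(1) by simp
    also have "\<dots> \<le> t / T"
      using assms(1,2) by (simp add: field_simps)
    also have "\<dots> \<le> t / v"
      using False \<open>v > 0\<close> \<open>t \<ge> 0\<close> by (simp add: frac_le)
    also have "\<dots> \<le> \<sigma> v + t / v"
      using nonneg[of v] \<open>v > 0\<close> by simp
    finally show ?thesis .
  qed (rule tail)
qed

lemma lstar_iota_scaled_le:
  assumes "T > 0" "a > 0" "b \<ge> 0" "L > 0"
    and scaled: "\<And>v. v \<ge> T \<Longrightarrow> \<sigma> (a * v) \<le> L * \<sigma> v"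
    and "2 * T * \<sigma> (2 * T) \<le> t"
  shows "lstar (iota \<sigma>) (b * t) \<le> max L (b / a) * lstar (iota \<sigma>) t"
proof -
  define M where "M = max L (b / a)"
  have "M > 0"
    using assms(4) by (simp add: M_def)
  have "t \<ge> 0"
    using assms(1,6) nonneg[of "2 * T"] by (smt (verit) mult_nonneg_nonneg)
  have "lstar (iota \<sigma>) (b * t) / M \<le> lstar (iota \<sigma>) t"
  proof (rule lstar_iota_greatest_tail[OF assms(1,6)])
    fix v :: real
    assume "v \<ge> T"
    then have "v > 0"
      using assms(1) by simp
    have "lstar (iota \<sigma>) (b * t) \<le> \<sigma> (a * v) + b * t / (a * v)"
      using lstar_iota_le \<open>v > 0\<close> assms(2,3) \<open>t \<ge> 0\<close> by simp
    also have "\<dots> \<le> L * \<sigma> v + b / a * (t / v)"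
      using scaled[OF \<open>v \<ge> T\<close>] by simp
    also have "\<dots> \<le> M * \<sigma> v + M * (t / v)"
      using nonneg[of v] \<open>v > 0\<close> \<open>t \<ge> 0\<close> unfolding M_def
      by (intro add_mono mult_right_mono) auto
    finally show "lstar (iota \<sigma>) (b * t) / M \<le> \<sigma> v + t / v"
      using \<open>M > 0\<close> by (simp add: divide_le_eq algebra_simps)
  qed
  then show ?thesis
    using \<open>M > 0\<close> by (simp add: M_def divide_le_eq mult.commute)
qed

lemma min_le_lstar_iota:
  assumes mono: "mono_on {0..} \<sigma>" and "v > 0" "t \<ge> 0"
  shows "min (\<sigma> v) (t / v) \<le> lstar (iota \<sigma>) t"
proof (rule lstar_iota_greatest)
  fix u :: real
  assume "u > 0"
  show "min (\<sigma> v) (t / v) \<le> \<sigma> u + t / u"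
  proof (cases "v \<le> u")
    case True
    then have "\<sigma> v \<le> \<sigma> u"
      using mono \<open>v > 0\<close> by (auto intro: mono_onD)
    moreover have "t / u \<ge> 0"
      using \<open>u > 0\<close> \<open>t \<ge> 0\<close> by simp
    ultimately show ?thesis
      by linarith
  next
    case False
    then have "t / v \<le> t / u"
      using \<open>u > 0\<close> \<open>t \<ge> 0\<close> by (simp add: frac_le)
    then show ?thesis
      using nonneg[of u] \<open>u > 0\<close> by linarith
  qed
qed

lemma lstar_iota_crossing:
  assumes "T > 0" "u > 0" "2 * T \<le> u * lstar (iota \<sigma>) T"
  obtains t where "t \<ge> T" "lstar (iota \<sigma>) t \<le> 2 * \<sigma> u"
    "u * lstar (iota \<sigma>) (2 * t) < 4 * t"
proof -
  define g where "g = lstar (iota \<sigma>)"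
  have "\<forall>\<^sub>F t in at_top. g t \<le> 1 / u * t"
    unfolding g_def using \<open>u > 0\<close> by (intro lstar_iota_sublinear) simp
  then have "\<forall>\<^sub>F t in at_top. u / 2 * g t < t"
    using eventually_gt_at_top[of 0]
  proof eventually_elim
    case (elim t)
    then have "u / 2 * g t \<le> t / 2"
      using \<open>u > 0\<close> by (simp add: field_simps)
    then show ?case
      using elim by simp
  qed
  moreover have "T \<le> u / 2 * g T"
    using assms(3) by (simp add: g_def)
  ultimately obtain t where t: "t \<ge> T" "t \<le> u / 2 * g t" "u / 2 * g (2 * t) < 2 * t"
    using doubling_crossing[of T "\<lambda>t. u / 2 * g t"] \<open>T > 0\<close> by auto
  have "g t \<le> \<sigma> u + t / u"
    unfolding g_def using lstar_iota_le \<open>u > 0\<close> t(1) \<open>T > 0\<close> by simp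
  moreover have "t / u \<le> g t / 2"
    using t(2) \<open>u > 0\<close> by (simp add: divide_le_eq field_simps)
  ultimately have "g t \<le> 2 * \<sigma> u"
    by linarith
  moreover have "u * g (2 * t) < 4 * t"
    using t(3) by simp
  ultimately show ?thesis
    using that t(1) unfolding g_def by blast
qed

lemma sigma_scaled_le_of_lstar_iota_scaled:
  assumes mono: "mono_on {0..} \<sigma>"
    and "T > 0" "L > 0" "\<Lambda> > 0" "2 * \<Lambda> * L \<le> q"
    and scaled: "\<And>t. t \<ge> T \<Longrightarrow> lstar (iota \<sigma>) (q * t) \<le> L * lstar (iota \<sigma>) t"
    and "u > 0" "2 * T \<le> u * lstar (iota \<sigma>) T"
  shows "\<sigma> (\<Lambda> * u) \<le> 4 * L * \<sigma> u"
proof -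
  define g where "g = lstar (iota \<sigma>)"
  obtain t where t: "t \<ge> T" "g t \<le> 2 * \<sigma> u" "u * g (2 * t) < 4 * t"
    using lstar_iota_crossing[OF assms(2,7,8)] unfolding g_def by blast
  have "t > 0"
    using t(1) \<open>T > 0\<close> by simp
  define t' where "t' = q * (2 * t)"
  have "q > 0"
    using assms(3-5) by (smt (verit) mult_pos_pos)
  then have "t' > 0"
    using \<open>t > 0\<close> by (simp add: t'_def)
  have g_t': "g t' \<le> L * g (2 * t)"
    unfolding t'_def g_def using scaled t(1) \<open>t > 0\<close> by simp
  have "\<Lambda> * u * g t' \<le> \<Lambda> * L * (u * g (2 * t))"
    using g_t' \<open>\<Lambda> > 0\<close> \<open>u > 0\<close> by (simp add: algebra_simps)
  also have "\<dots> < \<Lambda> * L * (4 * t)"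
    using t(3) \<open>\<Lambda> > 0\<close> \<open>L > 0\<close> by simp
  also have "\<dots> \<le> t'"
    using assms(5) \<open>t > 0\<close> by (simp add: t'_def mult_ac)
  finally have "g t' < t' / (\<Lambda> * u)"
    using \<open>\<Lambda> > 0\<close> \<open>u > 0\<close> by (simp add: field_simps)
  moreover have "min (\<sigma> (\<Lambda> * u)) (t' / (\<Lambda> * u)) \<le> g t'"
    unfolding g_def using min_le_lstar_iota[OF mono] \<open>\<Lambda> > 0\<close> \<open>u > 0\<close> \<open>t' > 0\<close> by simp
  ultimately have "\<sigma> (\<Lambda> * u) \<le> g t'"
    by linarith
  also have "\<dots> \<le> L * g (2 * t)"
    by (rule g_t')
  also have "\<dots> \<le> L * (2 * (2 * \<sigma> u))"
    using lstar_iota_scale_le[of 2 t] \<open>t > 0\<close> t(2) \<open>L > 0\<close> by (simp add: g_def)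
  finally show ?thesis
    by simp
qed

context
  assumes mono: "mono_on {0..} \<sigma>" and unbounded: "filterlim \<sigma> at_top at_top"
begin

lemma eventually_sigma_pos: "\<forall>\<^sub>F t in at_top. \<sigma> t > 0"
  using unbounded by (simp add: filterlim_at_top_dense)

lemma lstar_iota_pos:
  assumes "t > 0"
  shows "lstar (iota \<sigma>) t > 0"
proof -
  obtain v where "v > 0" "\<sigma> v > 0"
    using eventually_happens'[OF _ eventually_conj[OF eventually_gt_at_top eventually_sigma_pos]]
    by auto
  then have "0 < min (\<sigma> v) (t / v)"
    using assms by simp
  also have "\<dots> \<le> lstar (iota \<sigma>) t"
    using min_le_lstar_iota[OF mono \<open>v > 0\<close>] assms by simp
  finally show ?thesis .
qed

lemma eventually_lstar_iota_pos: "\<forall>\<^sub>F t in at_top. lstar (iota \<sigma>) t > 0"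
  using eventually_gt_at_top[of 0] by eventually_elim (rule lstar_iota_pos)

lemma P_prop_lstar_iota:
  assumes "\<gamma> > 0" "P_prop \<sigma> \<gamma>"
  shows "P_prop (lstar (iota \<sigma>)) (\<gamma> + 1)"
proof -
  obtain K L where K: "K > 1" "L > 0" "L < K"
    and bound: "\<forall>\<^sub>F t in at_top. \<sigma> (K powr \<gamma> * t) \<le> L * \<sigma> t"
    using assms(2) unfolding P_prop_iff_eventually_le[OF eventually_sigma_pos] by blast
  obtain n where n: "n \<ge> 1" "L * L ^ n < K ^ n"
    using eventually_happens'[OF _ eventually_conj[OF eventually_ge_at_top
          eventually_mult_power_less_power[of L K L]]] K
    by auto
  define a where "a = K powr (\<gamma> * real (n + 1))"
  have "(K powr \<gamma>) ^ (n + 1) = a"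
    using K(1) powr_realpow[of "K powr \<gamma>" "n + 1"] by (simp add: a_def powr_powr)
  moreover have "\<forall>\<^sub>F v in at_top. \<sigma> ((K powr \<gamma>) ^ (n + 1) * v) \<le> L ^ (n + 1) * \<sigma> v"
    using K by (intro eventually_scaled_le_power bound) auto
  ultimately obtain T where "T > 0" and T: "\<And>v. v \<ge> T \<Longrightarrow> \<sigma> (a * v) \<le> L ^ (n + 1) * \<sigma> v"
    by (auto elim: eventually_at_top_posE)
  txt \<open>The iterated bound scales \<open>\<sigma>\<close> by \<open>a\<close> at cost \<open>L ^ (n + 1) < K ^ n\<close>; scaling \<open>t\<close> by
    \<open>(K ^ n) powr (\<gamma> + 1)\<close> then costs \<open>K powr (real n - \<gamma>) < K ^ n\<close> in the \<open>t / v\<close> term.\<close>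
  define M where "M = max (L ^ (n + 1)) ((K ^ n) powr (\<gamma> + 1) / a)"
  have "(K ^ n) powr (\<gamma> + 1) / a = K powr (real n - \<gamma>)"
    using K(1) by (simp add: a_def powr_realpow[symmetric] powr_powr powr_diff[symmetric] algebra_simps)
  also have "\<dots> < K ^ n"
    using K(1) \<open>\<gamma> > 0\<close> by (simp add: powr_realpow[symmetric])
  finally have "M < K ^ n"
    using n(2) by (simp add: M_def)
  moreover have "M > 0"
    using K(2) by (simp add: M_def less_max_iff_disj)
  moreover have "K ^ n > 1"
    using K(1) n(1) by simp
  moreover have
    "\<forall>\<^sub>F t in at_top. lstar (iota \<sigma>) ((K ^ n) powr (\<gamma> + 1) * t) \<le> M * lstar (iota \<sigma>) t"
    using eventually_ge_at_top[of "2 * T * \<sigma> (2 * T)"]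
    by eventually_elim
      (unfold M_def, rule lstar_iota_scaled_le[OF \<open>T > 0\<close> _ _ _ T], use K in \<open>simp_all add: a_def\<close>)
  ultimately show ?thesis
    unfolding P_prop_iff_eventually_le[OF eventually_lstar_iota_pos] by blast
qed

lemma P_prop_of_lstar_iota:
  assumes "\<beta> > 1" "P_prop (lstar (iota \<sigma>)) \<beta>"
  shows "P_prop \<sigma> (\<beta> - 1)"
proof -
  obtain K L where K: "K > 1" "L > 0" "L < K"
    and bound: "\<forall>\<^sub>F t in at_top. lstar (iota \<sigma>) (K powr \<beta> * t) \<le> L * lstar (iota \<sigma>) t"
    using assms(2) unfolding P_prop_iff_eventually_le[OF eventually_lstar_iota_pos] by blast
  obtain m where m: "m \<ge> 1" "4 * L ^ m < K ^ m"
    using eventually_happens'[OF _ eventually_conj[OF eventually_ge_at_top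
          eventually_mult_power_less_power[of L K 4]]] K
    by auto
  define \<Lambda> where "\<Lambda> = (K ^ m) powr (\<beta> - 1)"
  define q where "q = (K ^ m) powr \<beta>"
  have "q = (K powr \<beta>) ^ m"
    using K(1) powr_realpow[of "K powr \<beta>" m]
    by (simp add: q_def powr_realpow[symmetric] powr_powr mult.commute)
  moreover have
    "\<forall>\<^sub>F t in at_top. lstar (iota \<sigma>) ((K powr \<beta>) ^ m * t) \<le> L ^ m * lstar (iota \<sigma>) t"
    using K by (intro eventually_scaled_le_power bound) auto
  ultimately obtain T where "T > 0"
    and T: "\<And>t. t \<ge> T \<Longrightarrow> lstar (iota \<sigma>) (q * t) \<le> L ^ m * lstar (iota \<sigma>) t"
    by (auto elim: eventually_at_top_posE)
  have "q = (K ^ m) powr 1 * \<Lambda>"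
    unfolding q_def \<Lambda>_def powr_add[symmetric] by simp
  then have "q = K ^ m * \<Lambda>"
    using K(1) by simp
  then have "2 * \<Lambda> * L ^ m \<le> q"
    using m(2) K(1) zero_less_power[OF K(2), of m] by (simp add: \<Lambda>_def)
  have "lstar (iota \<sigma>) T > 0"
    using \<open>T > 0\<close> by (rule lstar_iota_pos)
  have "\<forall>\<^sub>F u in at_top. \<sigma> (\<Lambda> * u) \<le> 4 * L ^ m * \<sigma> u"
    using eventually_ge_at_top[of "2 * T / lstar (iota \<sigma>) T"] eventually_gt_at_top[of 0]
  proof eventually_elim
    case (elim u)
    show ?case
    proof (rule sigma_scaled_le_of_lstar_iota_scaled[OF mono \<open>T > 0\<close> _ _ _ T])
      show "2 * T \<le> u * lstar (iota \<sigma>) T"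
        using elim \<open>lstar (iota \<sigma>) T > 0\<close> by (simp add: divide_le_eq mult.commute)
    qed (use K elim \<open>2 * \<Lambda> * L ^ m \<le> q\<close> in \<open>simp_all add: \<Lambda>_def\<close>)
  qed
  moreover have "K ^ m > 1"
    using K(1) m(1) by simp
  moreover have "4 * L ^ m > 0"
    using K(2) by simp
  ultimately show ?thesis
    unfolding P_prop_iff_eventually_le[OF eventually_sigma_pos] \<Lambda>_def using m(2) by blast
qed

end

end

lemma gamma_idx_eq_Sup:
  assumes "{\<gamma>. \<gamma> > 0 \<and> P_prop f \<gamma>} \<noteq> {}"
  shows "gamma_idx f = Sup (ereal ` {\<gamma>. \<gamma> > 0 \<and> P_prop f \<gamma>})"
  unfolding gamma_idx_def using assms by (simp only: if_False)

lemma ereal_Sup_plus_one_eq: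
  fixes A B :: "real set"
  assumes "A \<noteq> {}" "\<And>x. x \<in> A \<Longrightarrow> x \<ge> 0"
    and up: "\<And>x. x \<in> A \<Longrightarrow> x + 1 \<in> B"
    and down: "\<And>y. y \<in> B \<Longrightarrow> y > 1 \<Longrightarrow> y - 1 \<in> A"
  shows "Sup (ereal ` A) + 1 = Sup (ereal ` B)"
proof -
  have "Sup (ereal ` A) + 1 = (SUP x\<in>A. ereal x + 1)"
    using SUP_ereal_add_left[OF assms(1), of 1 ereal] by simp
  also have "\<dots> = Sup (ereal ` B)"
  proof (rule antisym)
    show "(SUP x\<in>A. ereal x + 1) \<le> Sup (ereal ` B)"
    proof (rule SUP_least)
      fix x
      assume "x \<in> A"
      then have "ereal (x + 1) \<le> Sup (ereal ` B)"
        using up by (intro SUP_upper) auto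
      then show "ereal x + 1 \<le> Sup (ereal ` B)"
        by simp
    qed
  next
    obtain x0 where "x0 \<in> A"
      using assms(1) by blast
    show "Sup (ereal ` B) \<le> (SUP x\<in>A. ereal x + 1)"
    proof (rule SUP_least)
      fix y
      assume "y \<in> B"
      show "ereal y \<le> (SUP x\<in>A. ereal x + 1)"
      proof (cases "y > 1")
        case True
        then have "ereal (y - 1) + 1 \<le> (SUP x\<in>A. ereal x + 1)"
          using down[OF \<open>y \<in> B\<close>] by (intro SUP_upper)
        then show ?thesis
          by simp
      next
        case False
        then have "ereal y \<le> ereal x0 + 1"
          using assms(2)[OF \<open>x0 \<in> A\<close>] by simp
        also have "\<dots> \<le> (SUP x\<in>A. ereal x + 1)"
          using \<open>x0 \<in> A\<close> by (intro SUP_upper)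
        finally show ?thesis .
      qed
    qed
  qed
  finally show ?thesis .
qed

theorem corollary2p26:
  fixes \<sigma> :: "real \<Rightarrow> real"
  assumes "\<And>t. t \<ge> 0 \<Longrightarrow> \<sigma> t \<ge> 0"
    and "mono_on {0..} \<sigma>"
    and "filterlim \<sigma> at_top at_top"
    and "gamma_idx \<sigma> > 0"
  shows "gamma_idx \<sigma> + 1 = gamma_idx (lstar (iota \<sigma>))"
proof -
  define S where "S f = {\<gamma>. \<gamma> > 0 \<and> P_prop f \<gamma>}" for f
  have "S \<sigma> \<noteq> {}"
    using assms(4) by (auto simp: gamma_idx_def S_def split: if_splits)
  moreover have up: "\<gamma> + 1 \<in> S (lstar (iota \<sigma>))" if "\<gamma> \<in> S \<sigma>" for \<gamma>
    using P_prop_lstar_iota[OF assms(1-3)] that by (simp add: S_def)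
  moreover have "\<beta> - 1 \<in> S \<sigma>" if "\<beta> \<in> S (lstar (iota \<sigma>))" "\<beta> > 1" for \<beta>
    using P_prop_of_lstar_iota[OF assms(1-3)] that by (simp add: S_def)
  ultimately have "Sup (ereal ` S \<sigma>) + 1 = Sup (ereal ` S (lstar (iota \<sigma>)))"
    by (intro ereal_Sup_plus_one_eq) (auto simp: S_def)
  moreover have "S (lstar (iota \<sigma>)) \<noteq> {}"
    using up \<open>S \<sigma> \<noteq> {}\<close> by blast
  ultimately show ?thesis
    using \<open>S \<sigma> \<noteq> {}\<close> by (simp add: gamma_idx_eq_Sup S_def)
qed

end
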